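(* Let $\mathcal{A}$ be a pOC with state set $Q$ whose underlying chain $\mathcal{X}$ is strongly connected, with trend $t>0$, and assume $[p{\downarrow}]>0$ for all $p\in Q$. Let $v$ be a potential, $|v|=v_{\max}-v_{\min}$, and let $p\in Q$ satisfy $v_p=v_{\max}$. Then $$[p{\uparrow}]\ge\frac{t^3}{12(2|v|+4)^3}.$$
   Context: A pOC is $\mathcal{A}=(Q,\delta^{=0},\delta^{>0},P^{=0},P^{>0})$ with the following components. - $\delta^{>0}\subseteq Q\times\{-1,0,1\}\times Q$ are the positive rules and $\delta^{=0}\subseteq Q\times\{0,1\}\times Q$ are the zero rules. Every state has both kinds of outgoing rule. - $P^{>0}$ and $P^{=0}$ are positive probability distributions over the outgoing rules of each state. $\mathcal{M}_\mathcal{A}$ is the Markov chain on configurations $p(i)$ with the following transitions: - $p(0)\to q(c)$ with probability $P^{=0}(p,c,q)$; - for $i\ge1$, $p(i)\to q(i+c)$ with probability $P^{>0}(p,c,q)$. $[p{\uparrow}]$ is the probability that a run from $p(1)$ never reaches counter value zero, and $[p{\downarrow}]=1-[p{\uparrow}]$. $\mathcal{X}$ is the finite Markov chain on $Q$ with transition matrix $A_{pq}=\sum_cP^{>0}(p,c,q)$. With $\alpha$ its invariant distribution and $s_p=\sum_{(p,c,q)\in\delta^{>0}}P^{>0}(p,c,q)c$, the trend is $t=\alpha s$. A potential is $v\in\mathbb{R}^Q$ with $s+Av=v+\mathbf{1}t$. $v_{\max}$ and $v_{\min}$ are its largest and smallest components. *)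

theory Defs
  imports Complex_Main
begin

text \<open>Rules are encoded by their probabilities:
  Ppos p c q = P^{>0}(p,c,q), Pzero p c q = P^{=0}(p,c,q); the rule sets
  delta^{>0}, delta^{=0} are exactly the supports of these functions.\<close>

definition pOC :: "('q::finite \<Rightarrow> int \<Rightarrow> 'q \<Rightarrow> real) \<Rightarrow> ('q \<Rightarrow> int \<Rightarrow> 'q \<Rightarrow> real) \<Rightarrow> bool" where
  "pOC Pzero Ppos \<longleftrightarrow>
     (\<forall>p c q. Ppos p c q \<ge> 0 \<and> Pzero p c q \<ge> 0) \<and>
     (\<forall>p c q. Ppos p c q \<noteq> 0 \<longrightarrow> c \<in> {-1, 0, 1}) \<and>
     (\<forall>p c q. Pzero p c q \<noteq> 0 \<longrightarrow> c \<in> {0, 1}) \<and>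
     (\<forall>p. (\<Sum>q\<in>UNIV. \<Sum>c\<in>{-1,0,1}. Ppos p c q) = 1) \<and>
     (\<forall>p. (\<Sum>q\<in>UNIV. \<Sum>c\<in>{0,1}. Pzero p c q) = 1)"

text \<open>Probability that the run of M_A from q(i) visits counter value 0 within n steps.
  (From a positive counter value only positive rules are used.)\<close>
fun reach0 :: "('q::finite \<Rightarrow> int \<Rightarrow> 'q \<Rightarrow> real) \<Rightarrow> nat \<Rightarrow> 'q \<Rightarrow> nat \<Rightarrow> real" where
  "reach0 Ppos 0 q i = (if i = 0 then 1 else 0)"
| "reach0 Ppos (Suc n) q i =
     (if i = 0 then 1
      else (\<Sum>q'\<in>UNIV. \<Sum>c\<in>{-1,0,1}. Ppos q c q' * reach0 Ppos n q' (nat (int i + c))))"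

text \<open>[p down]: probability that a run from p(1) ever reaches counter value zero
  (limit = supremum of the increasing step-bounded probabilities); [p up] = 1 - [p down].\<close>
definition pdown :: "('q::finite \<Rightarrow> int \<Rightarrow> 'q \<Rightarrow> real) \<Rightarrow> 'q \<Rightarrow> real" where
  "pdown Ppos p = (SUP n. reach0 Ppos n p 1)"

definition pup :: "('q::finite \<Rightarrow> int \<Rightarrow> 'q \<Rightarrow> real) \<Rightarrow> 'q \<Rightarrow> real" where
  "pup Ppos p = 1 - pdown Ppos p"

definition Amat :: "('q::finite \<Rightarrow> int \<Rightarrow> 'q \<Rightarrow> real) \<Rightarrow> 'q \<Rightarrow> 'q \<Rightarrow> real" where
  "Amat Ppos p q = (\<Sum>c\<in>{-1,0,1}. Ppos p c q)"

definition svec :: "('q::finite \<Rightarrow> int \<Rightarrow> 'q \<Rightarrow> real) \<Rightarrow> 'q \<Rightarrow> real" where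
  "svec Ppos p = (\<Sum>q\<in>UNIV. \<Sum>c\<in>{-1,0,1}. Ppos p c q * real_of_int c)"

definition strongly_connected :: "('q \<Rightarrow> 'q \<Rightarrow> real) \<Rightarrow> bool" where
  "strongly_connected A \<longleftrightarrow> (\<forall>p q. (p, q) \<in> {(x, y). A x y > 0}\<^sup>*)"

definition invariant_dist :: "('q::finite \<Rightarrow> 'q \<Rightarrow> real) \<Rightarrow> ('q \<Rightarrow> real) \<Rightarrow> bool" where
  "invariant_dist A \<alpha> \<longleftrightarrow> (\<forall>p. \<alpha> p \<ge> 0) \<and> (\<Sum>p\<in>UNIV. \<alpha> p) = 1 \<and>
     (\<forall>q. (\<Sum>p\<in>UNIV. \<alpha> p * A p q) = \<alpha> q)"

definition trend :: "('q::finite \<Rightarrow> int \<Rightarrow> 'q \<Rightarrow> real) \<Rightarrow> ('q \<Rightarrow> real) \<Rightarrow> real" where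
  "trend Ppos \<alpha> = (\<Sum>p\<in>UNIV. \<alpha> p * svec Ppos p)"

definition potential :: "('q::finite \<Rightarrow> int \<Rightarrow> 'q \<Rightarrow> real) \<Rightarrow> real \<Rightarrow> ('q \<Rightarrow> real) \<Rightarrow> bool" where
  "potential Ppos t v \<longleftrightarrow>
     (\<forall>p. svec Ppos p + (\<Sum>q\<in>UNIV. Amat Ppos p q * v q) = v p + t)"

end

theory Submission
  imports Defs
begin

text \<open>Put \<open>M = 1 + |v|\<close> and \<open>\<theta> = t / M\<^sup>2\<close>. While the counter is positive, the quantity
  \<open>exp (-\<theta> (counter + v state))\<close> is a supermartingale: one step changes its exponent by at
  most \<open>\<theta> M \<le> 1\<close>, so \<open>exp y \<le> 1 + y + y\<^sup>2\<close> applies; the potential equation makes the expected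
  first-order change \<open>-\<theta> t\<close>, which exactly absorbs the second-order term \<open>\<theta>\<^sup>2 M\<^sup>2 = \<theta> t\<close>.
  Hence the probability of reaching zero from \<open>q(i)\<close> is at most
  \<open>exp (-\<theta> (i + v q - v\<^sub>m\<^sub>a\<^sub>x))\<close>, which for \<open>q = p\<close> and \<open>i = 1\<close> gives
  \<open>[p\<uparrow>] \<ge> 1 - exp (-\<theta>) \<ge> \<theta> / 2\<close>, a bound stronger than the claimed one.\<close>

lemma exp_le_1_plus_plus_square:
  fixes y :: real
  assumes "\<bar>y\<bar> \<le> 1"
  shows "exp y \<le> 1 + y + y\<^sup>2"
proof (cases "y \<ge> 0")
  case True
  then show ?thesis using assms exp_bound[of y] by simp
next
  case False
  have "exp y = 1 / exp (- y)" by (simp add: exp_minus field_simps)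
  also have "\<dots> \<le> 1 / (1 - y)"
    using False exp_ge_add_one_self[of "- y"] by (intro divide_left_mono) auto
  also have "\<dots> \<le> 1 + y + y\<^sup>2"
  proof -
    have "y ^ 3 \<le> 0" using False by (simp add: power3_eq_cube mult_nonneg_nonpos)
    then have "1 \<le> (1 - y) * (1 + y + y\<^sup>2)" by (simp add: algebra_simps power2_eq_square power3_eq_cube)
    then show ?thesis using False by (simp add: field_simps)
  qed
  finally show ?thesis .
qed

lemma half_le_1_minus_exp_neg:
  fixes x :: real
  assumes "0 \<le> x" "x \<le> 1"
  shows "x / 2 \<le> 1 - exp (- x)"
proof -
  have "exp (- x) = 1 / exp x" by (simp add: exp_minus field_simps)
  also have "\<dots> \<le> 1 / (1 + x)"
    using assms exp_ge_add_one_self[of x] by (intro divide_left_mono) auto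
  also have "\<dots> \<le> 1 - x / 2"
  proof -
    have "x * x \<le> x" using assms by (simp add: mult_left_le)
    then show ?thesis using assms by (simp add: field_simps)
  qed
  finally show ?thesis by simp
qed

lemma abs_diff_le_Max_minus_Min:
  fixes f :: "'a::finite \<Rightarrow> real"
  shows "\<bar>f a - f b\<bar> \<le> Max (range f) - Min (range f)"
proof -
  have "f x \<le> Max (range f)" "Min (range f) \<le> f x" for x by simp_all
  then show ?thesis by (smt (verit))
qed

lemma pOC_nonneg: "pOC Pzero P \<Longrightarrow> P q c b \<ge> 0"
  unfolding pOC_def by blast

lemma pOC_Amat_row_sum: "pOC Pzero P \<Longrightarrow> (\<Sum>b\<in>UNIV. Amat P q b) = 1"
  unfolding pOC_def Amat_def by blast

lemma pOC_svec_abs_le_1: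
  assumes "pOC Pzero P"
  shows "\<bar>svec P q\<bar> \<le> 1"
proof -
  have "\<bar>svec P q\<bar> = \<bar>\<Sum>b\<in>UNIV. P q 1 b - P q (-1) b\<bar>"
    unfolding svec_def by (simp add: sum_subtractf)
  also have "\<dots> \<le> (\<Sum>b\<in>UNIV. Amat P q b)"
    unfolding Amat_def
    using pOC_nonneg[OF assms, of q] by (intro order_trans[OF sum_abs] sum_mono) (simp add: abs_le_iff)
  finally show ?thesis using pOC_Amat_row_sum[OF assms] by simp
qed

lemma pOC_trend_le_1:
  assumes "pOC Pzero P" and "invariant_dist (Amat P) \<alpha>"
  shows "trend P \<alpha> \<le> 1"
proof -
  have \<alpha>: "\<And>q. \<alpha> q \<ge> 0" "(\<Sum>q\<in>UNIV. \<alpha> q) = 1"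
    using assms(2) unfolding invariant_dist_def by auto
  have "trend P \<alpha> \<le> (\<Sum>q\<in>UNIV. \<alpha> q * 1)"
    unfolding trend_def using \<alpha>(1) pOC_svec_abs_le_1[OF assms(1)]
    by (intro sum_mono mult_left_mono) (auto simp: abs_le_iff)
  then show ?thesis using \<alpha>(2) by simp
qed

definition exp_drift :: "('q::finite \<Rightarrow> int \<Rightarrow> 'q \<Rightarrow> real) \<Rightarrow> real \<Rightarrow> ('q \<Rightarrow> real) \<Rightarrow> 'q \<Rightarrow> real" where
  "exp_drift P \<theta> v q = (\<Sum>b\<in>UNIV. \<Sum>c\<in>{-1,0,1}. P q c b * exp (- \<theta> * (real_of_int c + v b - v q)))"

lemma pOC_exp_drift_le_1:
  assumes pOC: "pOC Pzero P" and pot: "potential P t v"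
    and v_close: "\<And>a b. \<bar>v a - v b\<bar> + 1 \<le> M"
    and "0 < \<theta>" "\<theta> * M \<le> 1" "\<theta> * M\<^sup>2 \<le> t"
  shows "exp_drift P \<theta> v q \<le> 1"
proof -
  have exp_le: "exp (- \<theta> * (real_of_int c + v b - v q))
      \<le> 1 - \<theta> * (real_of_int c + v b - v q) + \<theta> * t" if "c \<in> {-1,0,1}" for b c
  proof -
    define X where "X = real_of_int c + v b - v q"
    have "\<bar>X\<bar> \<le> M" using that v_close[of b q] unfolding X_def by auto
    moreover from this have "X\<^sup>2 \<le> M\<^sup>2" using power_mono[of "\<bar>X\<bar>" M 2] by simp
    ultimately have "\<bar>- \<theta> * X\<bar> \<le> \<theta> * M" and "(- \<theta> * X)\<^sup>2 \<le> \<theta>\<^sup>2 * M\<^sup>2"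
      using \<open>0 < \<theta>\<close> by (auto simp: abs_mult power_mult_distrib)
    moreover have "\<theta>\<^sup>2 * M\<^sup>2 \<le> \<theta> * t"
      using \<open>\<theta> * M\<^sup>2 \<le> t\<close> \<open>0 < \<theta>\<close> by (simp add: power2_eq_square mult.assoc mult_left_mono)
    ultimately show ?thesis
      using exp_le_1_plus_plus_square[of "- \<theta> * X"] \<open>\<theta> * M \<le> 1\<close> unfolding X_def by linarith
  qed
  have "exp_drift P \<theta> v q
      \<le> (\<Sum>b\<in>UNIV. \<Sum>c\<in>{-1,0,1}. P q c b * (1 - \<theta> * (real_of_int c + v b - v q) + \<theta> * t))"
    unfolding exp_drift_def by (intro sum_mono mult_left_mono exp_le pOC_nonneg[OF pOC])
  also have "\<dots> = (1 + \<theta> * t - \<theta> * (- v q)) * (\<Sum>b\<in>UNIV. Amat P q b)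
      - \<theta> * (svec P q + (\<Sum>b\<in>UNIV. Amat P q b * v b))"
    unfolding svec_def Amat_def
    by (simp add: sum_distrib_left sum_distrib_right sum_subtractf sum.distrib[symmetric] algebra_simps)
  also have "\<dots> = 1"
    using pot pOC_Amat_row_sum[OF pOC] unfolding potential_def by (simp add: algebra_simps)
  finally show ?thesis .
qed

lemma reach0_le_exp:
  assumes pOC: "pOC Pzero P" and "0 \<le> \<theta>" and v_le: "\<And>q. v q \<le> m"
    and drift: "\<And>q. exp_drift P \<theta> v q \<le> 1"
  shows "reach0 P n q i \<le> exp (- \<theta> * (real i + v q - m))"
proof (induction n arbitrary: q i)
  case 0
  have "exp (- \<theta> * (v q - m)) \<ge> 1"
    using \<open>0 \<le> \<theta>\<close> v_le[of q] by (simp add: mult_nonneg_nonpos)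
  then show ?case by simp
next
  case (Suc n)
  let ?g = "\<lambda>q i. exp (- \<theta> * (real i + v q - m))"
  show ?case
  proof (cases "i = 0")
    case True
    then show ?thesis using \<open>0 \<le> \<theta>\<close> v_le[of q] by (simp add: mult_nonneg_nonpos)
  next
    case False
    have step: "?g b (nat (int i + c)) = ?g q i * exp (- \<theta> * (real_of_int c + v b - v q))"
      if "c \<in> {-1,0,1}" for b c
    proof -
      have "real (nat (int i + c)) = real i + real_of_int c" using that False by auto
      then show ?thesis by (simp add: mult_exp_exp algebra_simps)
    qed
    have "reach0 P (Suc n) q i
        = (\<Sum>b\<in>UNIV. \<Sum>c\<in>{-1,0,1}. P q c b * reach0 P n b (nat (int i + c)))"
      using False by simp
    also have "\<dots> \<le> (\<Sum>b\<in>UNIV. \<Sum>c\<in>{-1,0,1}.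
        P q c b * (?g q i * exp (- \<theta> * (real_of_int c + v b - v q))))"
    proof (intro sum_mono mult_left_mono pOC_nonneg[OF pOC])
      fix b c assume "c \<in> {-1, 0, 1 :: int}"
      then show "reach0 P n b (nat (int i + c)) \<le> ?g q i * exp (- \<theta> * (real_of_int c + v b - v q))"
        using Suc.IH[of b "nat (int i + c)"] step[of c b] by simp
    qed
    also have "\<dots> = ?g q i * exp_drift P \<theta> v q"
      unfolding exp_drift_def by (simp add: sum_distrib_left algebra_simps)
    also have "\<dots> \<le> ?g q i"
      using drift[of q] by (simp add: mult_left_le)
    finally show ?thesis .
  qed
qed

lemma pdown_le_exp:
  assumes "pOC Pzero P" and "0 \<le> \<theta>" and "\<And>q. v q \<le> m"
    and "\<And>q. exp_drift P \<theta> v q \<le> 1"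
  shows "pdown P q \<le> exp (- \<theta> * (1 + v q - m))"
  unfolding pdown_def using reach0_le_exp[OF assms, of _ q 1] by (intro cSUP_least) auto

lemma cube_bound_le_half_div_square:
  fixes t M :: real
  assumes "0 < t" "t \<le> 1" "1 \<le> M"
  shows "t ^ 3 / (12 * (2 * M + 2) ^ 3) \<le> t / M\<^sup>2 / 2"
proof -
  have "t ^ 3 \<le> t" using assms by (simp add: power3_eq_cube mult_le_one mult_left_le)
  moreover have "2 * M\<^sup>2 \<le> 12 * (2 * M + 2) ^ 3"
    using assms by (simp add: power2_eq_square power3_eq_cube algebra_simps)
  ultimately have "t ^ 3 / (12 * (2 * M + 2) ^ 3) \<le> t / (2 * M\<^sup>2)"
    using assms by (intro frac_le) auto
  then show ?thesis by simp
qed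

theorem mainTheorem16:
  fixes Pzero Ppos :: "'q::finite \<Rightarrow> int \<Rightarrow> 'q \<Rightarrow> real"
    and \<alpha> v :: "'q \<Rightarrow> real" and p :: 'q
  assumes "pOC Pzero Ppos"
    and "strongly_connected (Amat Ppos)"
    and "invariant_dist (Amat Ppos) \<alpha>"
    and "trend Ppos \<alpha> > 0"
    and "\<forall>q. pdown Ppos q > 0"
    and "potential Ppos (trend Ppos \<alpha>) v"
    and "v p = Max (range v)"
  shows "pup Ppos p \<ge> (trend Ppos \<alpha>) ^ 3 /
           (12 * (2 * (Max (range v) - Min (range v)) + 4) ^ 3)"
proof -
  define t where "t = trend Ppos \<alpha>"
  define M where "M = 1 + (Max (range v) - Min (range v))"
  define \<theta> where "\<theta> = t / M\<^sup>2"
  have v_close: "\<bar>v a - v b\<bar> + 1 \<le> M" for a b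
    using abs_diff_le_Max_minus_Min[of v a b] unfolding M_def by linarith
  have "0 < t" "t \<le> 1" "1 \<le> M"
    using assms(4) pOC_trend_le_1[OF assms(1,3)] v_close[of p p] unfolding t_def by auto
  then have "0 < \<theta>" "\<theta> * M\<^sup>2 = t" "\<theta> * M \<le> 1"
    unfolding \<theta>_def by (auto simp: power2_eq_square)
  moreover have "\<theta> \<le> \<theta> * M" using \<open>0 < \<theta>\<close> \<open>1 \<le> M\<close> by (simp add: mult_le_cancel_left1)
  ultimately have "\<theta> \<le> 1" by linarith
  have "pdown Ppos p \<le> exp (- \<theta>)"
    using pdown_le_exp[OF assms(1), of \<theta> v "Max (range v)" p] pOC_exp_drift_le_1[OF assms(1,6) v_close]
      \<open>0 < \<theta>\<close> \<open>\<theta> * M \<le> 1\<close> \<open>\<theta> * M\<^sup>2 = t\<close> assms(7) unfolding t_def by simp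
  have "t ^ 3 / (12 * (2 * (Max (range v) - Min (range v)) + 4) ^ 3) = t ^ 3 / (12 * (2 * M + 2) ^ 3)"
    unfolding M_def by (simp add: algebra_simps)
  also have "\<dots> \<le> \<theta> / 2"
    unfolding \<theta>_def using \<open>0 < t\<close> \<open>t \<le> 1\<close> \<open>1 \<le> M\<close> by (rule cube_bound_le_half_div_square)
  also have "\<dots> \<le> pup Ppos p"
    using \<open>pdown Ppos p \<le> exp (- \<theta>)\<close> half_le_1_minus_exp_neg[of \<theta>] \<open>0 < \<theta>\<close> \<open>\<theta> \<le> 1\<close>
    unfolding pup_def by simp
  finally show ?thesis unfolding t_def .
qed

end
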